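(* Let $\rho$ be a state of $n$ finite-dimensional systems $1,\dots,n$, and let $\Sigma=\{k_1,k_2,\dots\}\subseteq\{1,\dots,n\}$ be nonempty. For each $k\in\Sigma$ let $\mathcal B_k=\{|a^{(k)}_{i}\rangle\}_i$ be an orthonormal basis of system $k$, and for multi-indices $\vec i=(i_{k_1},i_{k_2},\dots)$, $\vec j=(j_{k_1},j_{k_2},\dots)$ let $\rho_{\vec i\vec j}=\big(\langle a^{(k_1)}_{i_{k_1}}|\langle a^{(k_2)}_{i_{k_2}}|\cdots\big)\rho\big(|a^{(k_1)}_{j_{k_1}}\rangle|a^{(k_2)}_{j_{k_2}}\rangle\cdots\big)$, an operator on the systems not in $\Sigma$ (a scalar if $\Sigma=\{1,\dots,n\}$). Then $$Q^\Sigma_{\mathcal N}(\rho)=\min_{\bigotimes_{k\in\Sigma}\mathcal B_k}\frac12\Big(\sum_{\vec i,\vec j}\|\rho_{\vec i\vec j}\|_1-1\Big),$$ the minimum being over all choices of the bases $\mathcal B_k$, $k\in\Sigma$.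
   Context: $\|\cdot\|_1$ is the trace norm. Negativity of a bipartite state $\tau_{X:Y}$: $\mathcal N_{X:Y}(\tau)=(\|\tau^\Gamma\|_1-1)/2$, with $\tau^\Gamma$ the partial transpose with respect to one party. For a system $k$ of dimension $m$ with orthonormal basis $\{|a^{(k)}_i\rangle\}$, the measurement interaction is the isometry $V_k:k\to k\otimes k'$ ($k'$ an $m$-dimensional apparatus with computational basis $\{|i\rangle\}$), $V_k|a^{(k)}_i\rangle=|a^{(k)}_i\rangle|i\rangle$. The pre-measurement state is $\tilde\rho=(\bigotimes_{k\in\Sigma}V_k)\rho(\bigotimes_{k\in\Sigma}V_k)^\dagger$ on the systems $1,\dots,n$ together with the apparatuses $\Sigma'=\{k':k\in\Sigma\}$. The negativity of quantumness on $\Sigma$ is $Q^\Sigma_{\mathcal N}(\rho)=\min\mathcal N_{\{1,\dots,n\}:\Sigma'}(\tilde\rho)$ over all choices of bases of the systems in $\Sigma$. *)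

theory Defs
  imports "Jordan_Normal_Form.Matrix" "Jordan_Normal_Form.Char_Poly"
          "Jordan_Normal_Form.Schur_Decomposition"
          "HOL-Computational_Algebra.Computational_Algebra"
begin

text \<open>An operator on the sites S is a function
  cfg => cfg => complex, read as its matrix in the computational product basis.\<close>

definition cfgs :: "(nat \<Rightarrow> nat) \<Rightarrow> nat set \<Rightarrow> (nat \<Rightarrow> nat) set" where
  "cfgs d S = {f. (\<forall>k\<in>S. f k < d k) \<and> (\<forall>k. k \<notin> S \<longrightarrow> f k = 0)}"

text \<open>Matrix of an operator on a finite index set, via some enumeration of the index set
  (the trace norm does not depend on the enumeration).\<close>
definition op_to_mat :: "'a set \<Rightarrow> ('a \<Rightarrow> 'a \<Rightarrow> complex) \<Rightarrow> complex mat" where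
  "op_to_mat I A = (let e = (SOME e. bij_betw e {..<card I} I)
                    in mat (card I) (card I) (\<lambda>(i, j). A (e i) (e j)))"

text \<open>Trace norm tr sqrt(M^dagger M) = sum of the square roots of the eigenvalues
  (with multiplicity) of M^dagger M.\<close>
definition trace_norm_mat :: "complex mat \<Rightarrow> real" where
  "trace_norm_mat M = sum_mset (image_mset (\<lambda>l. sqrt (Re l)) (proots (char_poly (mat_adjoint M * M))))"

definition trace_norm :: "'a set \<Rightarrow> ('a \<Rightarrow> 'a \<Rightarrow> complex) \<Rightarrow> real" where
  "trace_norm I A = trace_norm_mat (op_to_mat I A)"

definition partial_transpose :: "nat set \<Rightarrow> ((nat \<Rightarrow> nat) \<Rightarrow> (nat \<Rightarrow> nat) \<Rightarrow> complex)
    \<Rightarrow> (nat \<Rightarrow> nat) \<Rightarrow> (nat \<Rightarrow> nat) \<Rightarrow> complex" where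
  "partial_transpose Y \<tau> g h = \<tau> (\<lambda>k. if k \<in> Y then h k else g k) (\<lambda>k. if k \<in> Y then g k else h k)"

definition negativity :: "(nat \<Rightarrow> nat) set \<Rightarrow> nat set
    \<Rightarrow> ((nat \<Rightarrow> nat) \<Rightarrow> (nat \<Rightarrow> nat) \<Rightarrow> complex) \<Rightarrow> real" where
  "negativity I Y \<tau> = (trace_norm I (partial_transpose Y \<tau>) - 1) / 2"

definition is_state :: "'a set \<Rightarrow> ('a \<Rightarrow> 'a \<Rightarrow> complex) \<Rightarrow> bool" where
  "is_state I \<rho> \<longleftrightarrow>
     (\<forall>v :: 'a \<Rightarrow> complex.
        (\<Sum>x\<in>I. \<Sum>y\<in>I. cnj (v x) * \<rho> x y * v y) \<in> \<real> \<and>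
        Re (\<Sum>x\<in>I. \<Sum>y\<in>I. cnj (v x) * \<rho> x y * v y) \<ge> 0)
     \<and> (\<Sum>x\<in>I. \<rho> x x) = 1"

text \<open>B k i x = <x|a_i^(k)>: the x-th component of the i-th basis vector of system k.
  B k is an orthonormal basis of C^(d k) for every k in Sigma.\<close>
definition onb :: "nat \<Rightarrow> (nat \<Rightarrow> nat \<Rightarrow> complex) \<Rightarrow> bool" where
  "onb m b \<longleftrightarrow> (\<forall>i<m. \<forall>j<m. (\<Sum>x<m. cnj (b i x) * b j x) = (if i = j then 1 else 0))"

definition bases :: "(nat \<Rightarrow> nat) \<Rightarrow> nat set \<Rightarrow> (nat \<Rightarrow> nat \<Rightarrow> nat \<Rightarrow> complex) set" where
  "bases d \<Sigma> = {B. \<forall>k\<in>\<Sigma>. onb (d k) (B k)}"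

text \<open>Systems are 1..n; the apparatus k' of system k is the site n + k, of dimension d k.\<close>
definition ext_dim :: "nat \<Rightarrow> (nat \<Rightarrow> nat) \<Rightarrow> nat \<Rightarrow> nat" where
  "ext_dim n d k = (if k \<le> n then d k else d (k - n))"

definition app_sites :: "nat \<Rightarrow> nat set \<Rightarrow> nat set" where
  "app_sites n \<Sigma> = (\<lambda>k. n + k) ` \<Sigma>"

text \<open>Matrix element <g| (tensor_{k in Sigma} V_k) |x>, with g a configuration of systems and
  apparatuses and x a configuration of the systems; V_k |a_i> = |a_i>|i>.\<close>
definition meas_iso :: "nat \<Rightarrow> nat set \<Rightarrow> (nat \<Rightarrow> nat \<Rightarrow> nat \<Rightarrow> complex)
    \<Rightarrow> (nat \<Rightarrow> nat) \<Rightarrow> (nat \<Rightarrow> nat) \<Rightarrow> complex" where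
  "meas_iso n \<Sigma> B g x =
     (\<Prod>k\<in>\<Sigma>. B k (g (n + k)) (g k) * cnj (B k (g (n + k)) (x k)))
     * (if \<forall>k\<in>{1..n} - \<Sigma>. g k = x k then 1 else 0)"

definition premeas :: "nat \<Rightarrow> (nat \<Rightarrow> nat) \<Rightarrow> nat set \<Rightarrow> (nat \<Rightarrow> nat \<Rightarrow> nat \<Rightarrow> complex)
    \<Rightarrow> ((nat \<Rightarrow> nat) \<Rightarrow> (nat \<Rightarrow> nat) \<Rightarrow> complex) \<Rightarrow> (nat \<Rightarrow> nat) \<Rightarrow> (nat \<Rightarrow> nat) \<Rightarrow> complex" where
  "premeas n d \<Sigma> B \<rho> g h =
     (\<Sum>x\<in>cfgs d {1..n}. \<Sum>y\<in>cfgs d {1..n}.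
        meas_iso n \<Sigma> B g x * \<rho> x y * cnj (meas_iso n \<Sigma> B h y))"

text \<open>Negativity of quantumness on Sigma (the minimum over bases, written as an infimum).\<close>
definition QN :: "nat \<Rightarrow> (nat \<Rightarrow> nat) \<Rightarrow> nat set
    \<Rightarrow> ((nat \<Rightarrow> nat) \<Rightarrow> (nat \<Rightarrow> nat) \<Rightarrow> complex) \<Rightarrow> real" where
  "QN n d \<Sigma> \<rho> = (INF B\<in>bases d \<Sigma>.
      negativity (cfgs (ext_dim n d) ({1..n} \<union> app_sites n \<Sigma>)) (app_sites n \<Sigma>)
                 (premeas n d \<Sigma> B \<rho>))"

definition block :: "nat \<Rightarrow> (nat \<Rightarrow> nat) \<Rightarrow> nat set \<Rightarrow> (nat \<Rightarrow> nat \<Rightarrow> nat \<Rightarrow> complex)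
    \<Rightarrow> ((nat \<Rightarrow> nat) \<Rightarrow> (nat \<Rightarrow> nat) \<Rightarrow> complex)
    \<Rightarrow> (nat \<Rightarrow> nat) \<Rightarrow> (nat \<Rightarrow> nat) \<Rightarrow> (nat \<Rightarrow> nat) \<Rightarrow> (nat \<Rightarrow> nat) \<Rightarrow> complex" where
  "block n d \<Sigma> B \<rho> i j u v =
     (\<Sum>s\<in>cfgs d \<Sigma>. \<Sum>t\<in>cfgs d \<Sigma>.
        cnj (\<Prod>k\<in>\<Sigma>. B k (i k) (s k))
        * \<rho> (\<lambda>k. if k \<in> \<Sigma> then s k else u k) (\<lambda>k. if k \<in> \<Sigma> then t k else v k)
        * (\<Prod>k\<in>\<Sigma>. B k (j k) (t k)))"

end

theory Submission
  imports Defs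
begin

text \<open>
  Write a configuration of the systems and the apparatuses as a triple (s, u, c) of its values on
  \<Sigma>, on the remaining systems and on the apparatuses. In these coordinates the partial transpose
  of the pre-measurement state with respect to the apparatuses has the entries
  <s|a_c'> conj <s'|a_c> <u|\<rho>_c'c|u'> between (s, u, c) and (s', u', c'). It therefore factors
  as L D R, where D is block diagonal with the blocks \<rho>_ij, L is an isometry and R is unitary,
  both built from the product basis. The trace norm, the sum of the square roots of the eigenvalues
  of M^dagger M, is unchanged by such a factorization and additive over diagonal blocks, so for each
  choice of bases the negativity is (sum_ij ||\<rho>_ij||_1 - 1)/2; taking the infimum over the bases
  gives the theorem.
\<close>

section \<open>Operators on finite index sets\<close>

definition op_enum :: "'a set \<Rightarrow> nat \<Rightarrow> 'a" where
  "op_enum I = (SOME e. bij_betw e {..<card I} I)"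

lemma bij_betw_op_enum: "finite I \<Longrightarrow> bij_betw (op_enum I) {..<card I} I"
  using ex_bij_betw_nat_finite[of I] unfolding op_enum_def atLeast0LessThan by (metis someI_ex)

definition mat_of_op ::
    "(nat \<Rightarrow> 'a) \<Rightarrow> (nat \<Rightarrow> 'b) \<Rightarrow> nat \<Rightarrow> nat \<Rightarrow> ('a \<Rightarrow> 'b \<Rightarrow> complex) \<Rightarrow> complex mat" where
  "mat_of_op e f n m A = mat n m (\<lambda>(i, j). A (e i) (f j))"

definition op_mult :: "'b set \<Rightarrow> ('a \<Rightarrow> 'b \<Rightarrow> complex) \<Rightarrow> ('b \<Rightarrow> 'c \<Rightarrow> complex) \<Rightarrow> 'a \<Rightarrow> 'c \<Rightarrow> complex" where
  "op_mult J A B x z = (\<Sum>y\<in>J. A x y * B y z)"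

definition op_adjoint :: "('a \<Rightarrow> 'b \<Rightarrow> complex) \<Rightarrow> 'b \<Rightarrow> 'a \<Rightarrow> complex" where
  "op_adjoint A x y = cnj (A y x)"

definition op_id :: "'a \<Rightarrow> 'a \<Rightarrow> complex" where
  "op_id x y = (if x = y then 1 else 0)"

lemma op_to_mat_eq_mat_of_op:
  "op_to_mat I A = mat_of_op (op_enum I) (op_enum I) (card I) (card I) A"
  unfolding op_to_mat_def mat_of_op_def op_enum_def Let_def ..

lemma mat_of_op_carrier [simp]: "mat_of_op e f n m A \<in> carrier_mat n m"
  by (simp add: mat_of_op_def)

lemma dim_mat_of_op [simp]: "dim_row (mat_of_op e f n m A) = n" "dim_col (mat_of_op e f n m A) = m"
  by (simp_all add: mat_of_op_def)

lemma index_mat_of_op [simp]: "i < n \<Longrightarrow> j < m \<Longrightarrow> mat_of_op e f n m A $$ (i, j) = A (e i) (f j)"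
  by (simp add: mat_of_op_def)

lemma mat_of_op_cong:
  assumes "\<And>i j. i < n \<Longrightarrow> j < m \<Longrightarrow> A (e i) (f j) = B (e i) (f j)"
  shows "mat_of_op e f n m A = mat_of_op e f n m B"
  using assms by (intro eq_matI) auto

lemma mat_of_op_eq_one_mat:
  assumes "bij_betw e {..<n} I" and "\<And>x y. x \<in> I \<Longrightarrow> y \<in> I \<Longrightarrow> X x y = op_id x y"
  shows "mat_of_op e e n n X = 1\<^sub>m n"
proof (rule eq_matI)
  fix i j assume "i < dim_row (1\<^sub>m n)" "j < dim_col (1\<^sub>m n)"
  with assms show "mat_of_op e e n n X $$ (i, j) = 1\<^sub>m n $$ (i, j)"
    by (auto simp: op_id_def bij_betw_def inj_on_def)
qed auto

lemma mat_of_op_op_mult: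
  assumes "bij_betw g {..<m} J"
  shows "mat_of_op e h n k (op_mult J A B) = mat_of_op e g n m A * mat_of_op g h m k B"
proof (rule eq_matI)
  fix i j assume "i < dim_row (mat_of_op e g n m A * mat_of_op g h m k B)"
    "j < dim_col (mat_of_op e g n m A * mat_of_op g h m k B)"
  then have ij: "i < n" "j < k" by auto
  have "mat_of_op e h n k (op_mult J A B) $$ (i, j) = (\<Sum>y\<in>J. A (e i) y * B y (h j))"
    using ij by (simp add: op_mult_def)
  also have "\<dots> = (\<Sum>l<m. A (e i) (g l) * B (g l) (h j))"
    using sum.reindex_bij_betw[OF assms, of "\<lambda>y. A (e i) y * B y (h j)"] by simp
  also have "\<dots> = (mat_of_op e g n m A * mat_of_op g h m k B) $$ (i, j)"
    using ij by (simp add: scalar_prod_def atLeast0LessThan)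
  finally show "mat_of_op e h n k (op_mult J A B) $$ (i, j) = \<dots>" .
qed auto

lemma op_mult_op_id_left:
  assumes "finite I" "x \<in> I"
  shows "op_mult I op_id B x z = B x z"
proof -
  have "op_mult I op_id B x z = (\<Sum>y\<in>I. if x = y then B y z else 0)"
    unfolding op_mult_def op_id_def by (intro sum.cong) auto
  then show ?thesis using assms by simp
qed

lemma op_mult_op_id_right:
  assumes "finite I" "z \<in> I"
  shows "op_mult I B op_id x z = B x z"
proof -
  have "op_mult I B op_id x z = (\<Sum>y\<in>I. if y = z then B x y else 0)"
    unfolding op_mult_def op_id_def by (intro sum.cong) auto
  then show ?thesis using assms by simp
qed

lemma dim_mat_adjoint [simp]:
  "dim_row (mat_adjoint A) = dim_col A" "dim_col (mat_adjoint A) = dim_row A"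
  by (auto simp: mat_adjoint_def)

lemma index_mat_adjoint [simp]:
  "i < dim_col A \<Longrightarrow> j < dim_row A \<Longrightarrow> mat_adjoint A $$ (i, j) = cnj (A $$ (j, i))"
  by (simp add: mat_adjoint_def mat_of_rows_def)

lemma mat_adjoint_carrier: "A \<in> carrier_mat n m \<Longrightarrow> mat_adjoint A \<in> carrier_mat m n"
  by (metis carrier_matD carrier_matI dim_mat_adjoint)

lemma mat_adjoint_mat_of_op: "mat_adjoint (mat_of_op e f n m A) = mat_of_op f e m n (op_adjoint A)"
  by (rule eq_matI) (auto simp: op_adjoint_def)

lemma mat_adjoint_mult:
  fixes A B :: "complex mat"
  assumes "A \<in> carrier_mat n m" "B \<in> carrier_mat m k"
  shows "mat_adjoint (A * B) = mat_adjoint B * mat_adjoint A"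
  using assms by (intro eq_matI) (auto simp: scalar_prod_def mult.commute)

lemma op_to_mat_carrier [simp]: "op_to_mat I X \<in> carrier_mat (card I) (card I)"
  by (simp add: op_to_mat_eq_mat_of_op)

lemma op_to_mat_cong:
  assumes "finite I" and "\<And>x y. x \<in> I \<Longrightarrow> y \<in> I \<Longrightarrow> X x y = Y x y"
  shows "op_to_mat I X = op_to_mat I Y"
proof -
  have "op_enum I i \<in> I" if "i < card I" for i
    using bij_betw_op_enum[OF assms(1)] that by (auto simp: bij_betw_def)
  then show ?thesis
    unfolding op_to_mat_eq_mat_of_op by (intro mat_of_op_cong) (simp add: assms(2))
qed

section \<open>Characteristic polynomials and the trace norm\<close>

lemma char_poly_mat_of_op_bij:
  assumes I: "finite I" and e: "bij_betw e {..<card I} I"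
  shows "char_poly (mat_of_op e e (card I) (card I) X) = char_poly (op_to_mat I X)"
proof -
  let ?N = "card I" and ?e0 = "op_enum I"
  have e0: "bij_betw ?e0 {..<?N} I" by (rule bij_betw_op_enum[OF I])
  have e_in: "e i \<in> I" if "i < ?N" for i using e that by (auto simp: bij_betw_def)
  define P Q where "P = mat_of_op e ?e0 ?N ?N op_id" and "Q = mat_of_op ?e0 e ?N ?N op_id"
  have carrier: "P \<in> carrier_mat ?N ?N" "Q \<in> carrier_mat ?N ?N"
    by (simp_all add: P_def Q_def)
  have PQ: "P * Q = 1\<^sub>m ?N"
  proof -
    have "P * Q = mat_of_op e e ?N ?N (op_mult I op_id op_id)"
      unfolding P_def Q_def by (rule mat_of_op_op_mult[OF e0, symmetric])
    also have "\<dots> = 1\<^sub>m ?N"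
      by (rule mat_of_op_eq_one_mat[OF e]) (simp add: op_mult_op_id_left I)
    finally show ?thesis .
  qed
  have QP: "Q * P = 1\<^sub>m ?N"
    by (rule mat_mult_left_right_inverse[OF carrier PQ])
  have "mat_of_op e e ?N ?N X = mat_of_op e e ?N ?N (op_mult I op_id (op_mult I X op_id))"
    by (rule mat_of_op_cong) (simp add: op_mult_op_id_left op_mult_op_id_right I e_in)
  also have "\<dots> = P * (op_to_mat I X * Q)"
    unfolding P_def Q_def op_to_mat_eq_mat_of_op by (simp only: mat_of_op_op_mult[OF e0])
  also have "\<dots> = P * op_to_mat I X * Q"
    using carrier by (simp del: assoc_mult_mat add: assoc_mult_mat[symmetric, of _ ?N ?N _ ?N _ ?N])
  finally have "similar_mat (mat_of_op e e ?N ?N X) (op_to_mat I X)"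
    using carrier PQ QP by (intro similar_matI[of _ _ P Q ?N]) auto
  then show ?thesis by (rule char_poly_similar)
qed

lemma char_poly_op_to_mat_reindex:
  assumes I: "finite I" and f: "bij_betw f K I"
  shows "char_poly (op_to_mat K (\<lambda>x y. X (f x) (f y))) = char_poly (op_to_mat I X)"
proof -
  have K: "finite K" using f I bij_betw_finite by blast
  have card: "card K = card I" using f bij_betw_same_card by blast
  have "bij_betw (f \<circ> op_enum K) {..<card I} I"
    using bij_betw_trans[OF bij_betw_op_enum[OF K] f] card by simp
  from char_poly_mat_of_op_bij[OF I this, of X] show ?thesis
    by (simp add: op_to_mat_eq_mat_of_op mat_of_op_def card)
qed

lemma char_poly_four_block_diag:
  fixes A D :: "'a :: idom mat"
  assumes A: "A \<in> carrier_mat n n" and D: "D \<in> carrier_mat m m"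
  shows "char_poly (four_block_mat A (0\<^sub>m n m) (0\<^sub>m m n) D) = char_poly A * char_poly D"
proof -
  have "char_poly_matrix (four_block_mat A (0\<^sub>m n m) (0\<^sub>m m n) D)
      = four_block_mat (char_poly_matrix A) (0\<^sub>m n m) (0\<^sub>m m n) (char_poly_matrix D)"
    using A D by (intro eq_matI) (auto simp: char_poly_matrix_def)
  then show ?thesis
    unfolding char_poly_def by (simp add: det_four_block_mat_upper_right_zero[of _ n _ m] A D)
qed

lemma char_poly_op_to_mat_Un:
  assumes I1: "finite I1" and I2: "finite I2" and disj: "I1 \<inter> I2 = {}"
    and zero12: "\<And>x y. x \<in> I1 \<Longrightarrow> y \<in> I2 \<Longrightarrow> X x y = 0"
    and zero21: "\<And>x y. x \<in> I2 \<Longrightarrow> y \<in> I1 \<Longrightarrow> X x y = 0"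
  shows "char_poly (op_to_mat (I1 \<union> I2) X)
    = char_poly (op_to_mat I1 X) * char_poly (op_to_mat I2 X)"
proof -
  define n1 n2 e1 e2
    where "n1 = card I1" and "n2 = card I2" and "e1 = op_enum I1" and "e2 = op_enum I2"
  have b1: "bij_betw e1 {..<n1} I1" and b2: "bij_betw e2 {..<n2} I2"
    using bij_betw_op_enum[OF I1] bij_betw_op_enum[OF I2]
    by (simp_all add: n1_def n2_def e1_def e2_def)
  define e where "e i = (if i < n1 then e1 i else e2 (i - n1))" for i
  have card: "card (I1 \<union> I2) = n1 + n2"
    using card_Un_disjoint[OF I1 I2 disj] by (simp add: n1_def n2_def)
  have "bij_betw e {..<n1} I1"
    using b1 by (rule bij_betw_cong[THEN iffD1, rotated]) (auto simp: e_def)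
  moreover have "bij_betw e {n1..<n1 + n2} I2"
  proof -
    have "bij_betw (\<lambda>i. i - n1) {n1..<n1 + n2} {..<n2}"
      by (rule bij_betw_byWitness[where f'="\<lambda>i. i + n1"]) (auto simp: image_subset_iff)
    from bij_betw_trans[OF this b2] show ?thesis
      by (rule bij_betw_cong[THEN iffD1, rotated]) (auto simp: e_def)
  qed
  ultimately have "bij_betw e ({..<n1} \<union> {n1..<n1 + n2}) (I1 \<union> I2)"
    by (rule bij_betw_combine[OF _ _ disj])
  moreover have "{..<n1} \<union> {n1..<n1 + n2} = {..<card (I1 \<union> I2)}" using card by auto
  ultimately have b: "bij_betw e {..<card (I1 \<union> I2)} (I1 \<union> I2)" by simp
  have "e1 i \<in> I1" if "i < n1" for i using b1 that by (auto simp: bij_betw_def)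
  moreover have "e2 i \<in> I2" if "i < n2" for i using b2 that by (auto simp: bij_betw_def)
  ultimately have "mat_of_op e e (n1 + n2) (n1 + n2) X
      = four_block_mat (mat_of_op e1 e1 n1 n1 X) (0\<^sub>m n1 n2) (0\<^sub>m n2 n1) (mat_of_op e2 e2 n2 n2 X)"
    by (intro eq_matI) (auto simp: e_def zero12 zero21)
  then show ?thesis
    using char_poly_mat_of_op_bij[OF _ b, of X] I1 I2 card
    by (simp add: char_poly_four_block_diag op_to_mat_eq_mat_of_op n1_def n2_def e1_def e2_def)
qed

lemma char_poly_nonzero: "A \<in> carrier_mat n n \<Longrightarrow> char_poly A \<noteq> 0"
  using degree_monic_char_poly[of A n] by auto

lemma char_poly_dim_zero: "A \<in> carrier_mat 0 0 \<Longrightarrow> char_poly A = 1"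
  using degree_monic_char_poly[of A 0] by (auto elim: degree_eq_zeroE)

definition op_block_diag :: "('p \<Rightarrow> 'a \<Rightarrow> 'a \<Rightarrow> complex) \<Rightarrow> 'p \<times> 'a \<Rightarrow> 'p \<times> 'a \<Rightarrow> complex" where
  "op_block_diag Y q q' = (if fst q = fst q' then Y (fst q) (snd q) (snd q') else 0)"

lemma op_adjoint_op_block_diag:
  "op_adjoint (op_block_diag Y) = op_block_diag (\<lambda>p. op_adjoint (Y p))"
  by (auto simp: fun_eq_iff op_adjoint_def op_block_diag_def)

lemma op_mult_op_block_diag:
  assumes "finite P" "fst q \<in> P"
  shows "op_mult (P \<times> J) (op_block_diag Y) (op_block_diag Z) q q'
    = op_block_diag (\<lambda>p. op_mult J (Y p) (Z p)) q q'"
proof -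
  have "op_mult (P \<times> J) (op_block_diag Y) (op_block_diag Z) q q'
      = (\<Sum>p\<in>P. if p = fst q \<and> p = fst q' then op_mult J (Y p) (Z p) (snd q) (snd q') else 0)"
    unfolding op_mult_def sum.cartesian_product'
    by (intro sum.cong) (auto simp: op_block_diag_def)
  also have "\<dots> = op_block_diag (\<lambda>p. op_mult J (Y p) (Z p)) q q'"
  proof (cases "fst q = fst q'")
    case True
    then show ?thesis using assms by (simp add: op_block_diag_def)
  next
    case False
    then show ?thesis by (auto simp: op_block_diag_def intro: sum.neutral)
  qed
  finally show ?thesis .
qed

lemma char_poly_op_to_mat_block_diag:
  assumes "finite P" "finite J"
  shows "char_poly (op_to_mat (P \<times> J) (op_block_diag Y)) = (\<Prod>p\<in>P. char_poly (op_to_mat J (Y p)))"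
  using assms(1)
proof (induction P rule: finite_induct)
  case empty
  have "op_to_mat ({} \<times> J) (op_block_diag Y) \<in> carrier_mat 0 0"
    using op_to_mat_carrier[of "{} \<times> J"] by simp
  then show ?case by (simp add: char_poly_dim_zero)
next
  case (insert p P)
  have "char_poly (op_to_mat ({p} \<times> J) (op_block_diag Y)) = char_poly (op_to_mat J (Y p))"
  proof -
    have "bij_betw (Pair p) J ({p} \<times> J)"
      by (rule bij_betw_byWitness[where f'=snd]) auto
    from char_poly_op_to_mat_reindex[OF _ this, of "op_block_diag Y"] assms(2) show ?thesis
      by (simp add: op_block_diag_def)
  qed
  moreover have "char_poly (op_to_mat (insert p P \<times> J) (op_block_diag Y))
      = char_poly (op_to_mat ({p} \<times> J) (op_block_diag Y))
        * char_poly (op_to_mat (P \<times> J) (op_block_diag Y))"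
  proof -
    have split: "insert p P \<times> J = ({p} \<times> J) \<union> (P \<times> J)" by auto
    show ?thesis
      unfolding split
      by (rule char_poly_op_to_mat_Un) (use insert assms(2) in \<open>auto simp: op_block_diag_def\<close>)
  qed
  ultimately show ?case
    using insert by simp
qed

definition sqrt_root_sum :: "complex poly \<Rightarrow> real" where
  "sqrt_root_sum p = (\<Sum>z\<in>#proots p. sqrt (Re z))"

lemma sqrt_root_sum_prod:
  assumes "finite P" "\<And>p. p \<in> P \<Longrightarrow> f p \<noteq> 0"
  shows "sqrt_root_sum (\<Prod>p\<in>P. f p) = (\<Sum>p\<in>P. sqrt_root_sum (f p))"
  using assms by (induction P rule: finite_induct) (auto simp: sqrt_root_sum_def proots_mult)

lemma trace_norm_eq_char_poly:
  "finite I \<Longrightarrow> trace_norm I A = sqrt_root_sum (char_poly (op_to_mat I (op_mult I (op_adjoint A) A)))"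
  unfolding trace_norm_def trace_norm_mat_def sqrt_root_sum_def op_to_mat_eq_mat_of_op
    mat_adjoint_mat_of_op
  by (simp add: mat_of_op_op_mult[OF bij_betw_op_enum])

lemma trace_norm_op_block_diag:
  assumes P: "finite P" and J: "finite J"
  shows "trace_norm (P \<times> J) (op_block_diag Y) = (\<Sum>p\<in>P. trace_norm J (Y p))"
proof -
  let ?Z = "\<lambda>p. op_mult J (op_adjoint (Y p)) (Y p)"
  have "op_to_mat (P \<times> J) (op_mult (P \<times> J) (op_adjoint (op_block_diag Y)) (op_block_diag Y))
      = op_to_mat (P \<times> J) (op_block_diag ?Z)"
    using P J by (intro op_to_mat_cong) (auto simp: op_adjoint_op_block_diag op_mult_op_block_diag)
  then have "trace_norm (P \<times> J) (op_block_diag Y)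
      = sqrt_root_sum (char_poly (op_to_mat (P \<times> J) (op_block_diag ?Z)))"
    using P J by (simp add: trace_norm_eq_char_poly)
  also have "\<dots> = (\<Sum>p\<in>P. sqrt_root_sum (char_poly (op_to_mat J (?Z p))))"
    using P J by (simp add: char_poly_op_to_mat_block_diag sqrt_root_sum_prod
        char_poly_nonzero[OF op_to_mat_carrier])
  also have "\<dots> = (\<Sum>p\<in>P. trace_norm J (Y p))"
    using J by (simp add: trace_norm_eq_char_poly)
  finally show ?thesis .
qed

lemma trace_norm_mat_isometry_mult:
  fixes L A :: "complex mat"
  assumes L: "L \<in> carrier_mat m n" and A: "A \<in> carrier_mat n k"
    and isometry: "mat_adjoint L * L = 1\<^sub>m n"
  shows "trace_norm_mat (L * A) = trace_norm_mat A"
proof -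
  have adj: "mat_adjoint L \<in> carrier_mat n m" "mat_adjoint A \<in> carrier_mat k n"
    using L A by (simp_all only: mat_adjoint_carrier)
  have "mat_adjoint (L * A) * (L * A) = mat_adjoint A * mat_adjoint L * (L * A)"
    by (simp only: mat_adjoint_mult[OF L A])
  also have "\<dots> = mat_adjoint A * (mat_adjoint L * L * A)"
    using L A adj
    by (simp only: assoc_mult_mat[of _ k n _ m _ k] assoc_mult_mat[of _ n m _ n _ k]
        mult_carrier_mat)
  also have "\<dots> = mat_adjoint A * A"
    using A by (simp add: isometry)
  finally show ?thesis
    by (simp add: trace_norm_mat_def)
qed

lemma trace_norm_mat_mult_unitary:
  fixes A U :: "complex mat"
  assumes A: "A \<in> carrier_mat m n" and U: "U \<in> carrier_mat n n"
    and unitary: "U * mat_adjoint U = 1\<^sub>m n"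
  shows "trace_norm_mat (A * U) = trace_norm_mat A"
proof -
  have adj: "mat_adjoint U \<in> carrier_mat n n" "mat_adjoint A \<in> carrier_mat n m"
    using A U by (simp_all only: mat_adjoint_carrier)
  have unitary': "mat_adjoint U * U = 1\<^sub>m n"
    by (rule mat_mult_left_right_inverse[OF U adj(1) unitary])
  have "mat_adjoint (A * U) * (A * U) = mat_adjoint U * mat_adjoint A * (A * U)"
    by (simp only: mat_adjoint_mult[OF A U])
  also have "\<dots> = mat_adjoint U * (mat_adjoint A * A) * U"
    using A U adj by (simp only: assoc_mult_mat[of _ n n _ m _ n] assoc_mult_mat[of _ n m _ n _ n]
        assoc_mult_mat[of _ n n _ n _ n] mult_carrier_mat)
  moreover have "mat_adjoint A * A \<in> carrier_mat n n"
    using adj(2) A by (rule mult_carrier_mat)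
  ultimately have "similar_mat (mat_adjoint (A * U) * (A * U)) (mat_adjoint A * A)"
    using U adj(1) unitary unitary' by (intro similar_matI[of _ _ "mat_adjoint U" U n]) auto
  then show ?thesis
    unfolding trace_norm_mat_def by (simp add: char_poly_similar)
qed

lemma trace_norm_cong:
  assumes "finite I" and "\<And>x y. x \<in> I \<Longrightarrow> y \<in> I \<Longrightarrow> A x y = B x y"
  shows "trace_norm I A = trace_norm I B"
  unfolding trace_norm_def using op_to_mat_cong[OF assms] by simp

lemma trace_norm_isometry_mult_unitary:
  fixes L :: "'a \<Rightarrow> 'b \<Rightarrow> complex" and D :: "'b \<Rightarrow> 'b \<Rightarrow> complex" and R :: "'b \<Rightarrow> 'a \<Rightarrow> complex"
  assumes I: "finite I" and K: "finite K" and card: "card K = card I"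
    and L: "\<And>q q'. q \<in> K \<Longrightarrow> q' \<in> K \<Longrightarrow> op_mult I (op_adjoint L) L q q' = op_id q q'"
    and R: "\<And>q q'. q \<in> K \<Longrightarrow> q' \<in> K \<Longrightarrow> op_mult I R (op_adjoint R) q q' = op_id q q'"
  shows "trace_norm I (op_mult K L (op_mult K D R)) = trace_norm K D"
proof -
  let ?N = "card I" and ?eI = "op_enum I" and ?eK = "op_enum K"
  have eI: "bij_betw ?eI {..<?N} I" using bij_betw_op_enum[OF I] .
  have eK: "bij_betw ?eK {..<?N} K" using bij_betw_op_enum[OF K] card by simp
  define LM DM RM where "LM = mat_of_op ?eI ?eK ?N ?N L" and "DM = mat_of_op ?eK ?eK ?N ?N D"
    and "RM = mat_of_op ?eK ?eI ?N ?N R"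
  have "trace_norm I (op_mult K L (op_mult K D R)) = trace_norm_mat (LM * (DM * RM))"
    by (simp add: trace_norm_def op_to_mat_eq_mat_of_op LM_def DM_def RM_def
        mat_of_op_op_mult[OF eK])
  also have "\<dots> = trace_norm_mat (DM * RM)"
  proof (rule trace_norm_mat_isometry_mult[where m = ?N and k = ?N])
    show "mat_adjoint LM * LM = 1\<^sub>m ?N"
      unfolding LM_def mat_adjoint_mat_of_op mat_of_op_op_mult[OF eI, symmetric]
      by (rule mat_of_op_eq_one_mat[OF eK L])
  qed (simp_all add: LM_def DM_def RM_def mult_carrier_mat[of _ ?N ?N _ ?N])
  also have "\<dots> = trace_norm_mat DM"
  proof (rule trace_norm_mat_mult_unitary[where m = ?N])
    show "RM * mat_adjoint RM = 1\<^sub>m ?N"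
      unfolding RM_def mat_adjoint_mat_of_op mat_of_op_op_mult[OF eI, symmetric]
      by (rule mat_of_op_eq_one_mat[OF eK R])
  qed (simp_all add: DM_def RM_def)
  also have "\<dots> = trace_norm K D"
    by (simp add: trace_norm_def op_to_mat_eq_mat_of_op DM_def card)
  finally show ?thesis .
qed

section \<open>The pre-measurement state in product coordinates\<close>

definition cfg_restrict :: "nat set \<Rightarrow> (nat \<Rightarrow> nat) \<Rightarrow> nat \<Rightarrow> nat" where
  "cfg_restrict S g = (\<lambda>k. if k \<in> S then g k else 0)"

definition apparatus_cfg :: "nat \<Rightarrow> nat set \<Rightarrow> (nat \<Rightarrow> nat) \<Rightarrow> nat \<Rightarrow> nat" where
  "apparatus_cfg n S g = (\<lambda>k. if k \<in> S then g (n + k) else 0)"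

definition cfg_merge :: "nat set \<Rightarrow> (nat \<Rightarrow> nat) \<Rightarrow> (nat \<Rightarrow> nat) \<Rightarrow> nat \<Rightarrow> nat" where
  "cfg_merge S s u = (\<lambda>k. if k \<in> S then s k else u k)"

definition cfg_extend ::
    "nat \<Rightarrow> nat set \<Rightarrow> (nat \<Rightarrow> nat) \<Rightarrow> (nat \<Rightarrow> nat) \<Rightarrow> (nat \<Rightarrow> nat) \<Rightarrow> nat \<Rightarrow> nat" where
  "cfg_extend n S s u c = (\<lambda>k. if k \<le> n then cfg_merge S s u k else c (k - n))"

definition prod_basis :: "nat set \<Rightarrow> (nat \<Rightarrow> nat \<Rightarrow> nat \<Rightarrow> complex)
    \<Rightarrow> (nat \<Rightarrow> nat) \<Rightarrow> (nat \<Rightarrow> nat) \<Rightarrow> complex" where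
  "prod_basis S B a s = (\<Prod>k\<in>S. B k (a k) (s k))"

lemma prod_basis_cong: "(\<And>k. k \<in> S \<Longrightarrow> s k = t k) \<Longrightarrow> prod_basis S B a s = prod_basis S B a t"
  unfolding prod_basis_def by (rule prod.cong) simp_all

lemma prod_basis_cfg_merge [simp]: "prod_basis S B a (cfg_merge S s u) = prod_basis S B a s"
  by (rule prod_basis_cong) (simp add: cfg_merge_def)

lemma block_eq:
  "block n d \<Sigma> B \<rho> i j u v = (\<Sum>s\<in>cfgs d \<Sigma>. \<Sum>t\<in>cfgs d \<Sigma>.
     cnj (prod_basis \<Sigma> B i s) * \<rho> (cfg_merge \<Sigma> s u) (cfg_merge \<Sigma> t v) * prod_basis \<Sigma> B j t)"
  unfolding block_def prod_basis_def cfg_merge_def ..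

lemma cfg_restrict_cfg_merge:
  "u \<in> cfgs d (U - S) \<Longrightarrow> cfg_restrict (U - S) (cfg_merge S s u) = u"
  by (auto simp: cfg_restrict_def cfg_merge_def cfgs_def fun_eq_iff)

lemma finite_cfgs:
  assumes "finite S"
  shows "finite (cfgs d S)"
proof -
  have "cfgs d S \<subseteq> (\<lambda>f. cfg_restrict S f) ` PiE S (\<lambda>k. {..<d k})"
  proof
    fix g assume g: "g \<in> cfgs d S"
    then have "g = cfg_restrict S (restrict g S)" by (auto simp: cfgs_def cfg_restrict_def)
    moreover have "restrict g S \<in> PiE S (\<lambda>k. {..<d k})" using g by (auto simp: cfgs_def)
    ultimately show "g \<in> (\<lambda>f. cfg_restrict S f) ` PiE S (\<lambda>k. {..<d k})" by blast
  qed
  then show ?thesis by (rule finite_subset) (use assms in \<open>auto intro: finite_PiE\<close>)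
qed

lemma sum_cfgs_prod:
  assumes "finite S"
  shows "(\<Sum>s\<in>cfgs d S. \<Prod>k\<in>S. f k (s k)) = (\<Prod>k\<in>S. \<Sum>x<d k. (f k x :: complex))"
proof -
  have "bij_betw (cfg_restrict S) (PiE S (\<lambda>k. {..<d k})) (cfgs d S)"
    by (rule bij_betw_byWitness[where f'="\<lambda>g. restrict g S"])
       (auto simp: cfgs_def cfg_restrict_def PiE_def extensional_def fun_eq_iff)
  then have "(\<Sum>s\<in>cfgs d S. \<Prod>k\<in>S. f k (s k))
      = (\<Sum>g\<in>PiE S (\<lambda>k. {..<d k}). \<Prod>k\<in>S. f k (cfg_restrict S g k))"
    by (rule sum.reindex_bij_betw[symmetric])
  also have "\<dots> = (\<Sum>g\<in>PiE S (\<lambda>k. {..<d k}). \<Prod>k\<in>S. f k (g k))"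
    by (intro sum.cong prod.cong) (auto simp: cfg_restrict_def)
  also have "\<dots> = (\<Prod>k\<in>S. \<Sum>x<d k. f k x)"
    by (rule prod_sum_PiE[symmetric]) (use assms in auto)
  finally show ?thesis .
qed

lemma prod_basis_orthonormal:
  assumes S: "finite S" and B: "\<forall>k\<in>S. onb (d k) (B k)"
    and a: "a \<in> cfgs d S" and a': "a' \<in> cfgs d S"
  shows "(\<Sum>s\<in>cfgs d S. cnj (prod_basis S B a s) * prod_basis S B a' s) = op_id a a'"
proof -
  have "(\<Sum>s\<in>cfgs d S. cnj (prod_basis S B a s) * prod_basis S B a' s)
      = (\<Prod>k\<in>S. \<Sum>x<d k. cnj (B k (a k) x) * B k (a' k) x)"
    unfolding prod_basis_def cnj_prod prod.distrib[symmetric] by (rule sum_cfgs_prod[OF S])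
  also have "\<dots> = (\<Prod>k\<in>S. op_id (a k) (a' k))"
    using B a a' by (intro prod.cong) (auto simp: onb_def cfgs_def op_id_def)
  also have "\<dots> = op_id a a'"
  proof -
    have "a = a' \<longleftrightarrow> (\<forall>k\<in>S. a k = a' k)"
      using a a' by (auto simp: cfgs_def fun_eq_iff)
    then show ?thesis using S by (auto simp: op_id_def)
  qed
  finally show ?thesis .
qed

lemma meas_iso_eq:
  "meas_iso n \<Sigma> B g x =
     (if cfg_restrict ({1..n} - \<Sigma>) x = cfg_restrict ({1..n} - \<Sigma>) g
      then prod_basis \<Sigma> B (apparatus_cfg n \<Sigma> g) g * cnj (prod_basis \<Sigma> B (apparatus_cfg n \<Sigma> g) x)
      else 0)"
proof -
  have "(\<forall>k\<in>{1..n} - \<Sigma>. g k = x k) \<longleftrightarrow> cfg_restrict ({1..n} - \<Sigma>) x = cfg_restrict ({1..n} - \<Sigma>) g"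
    by (auto simp: cfg_restrict_def fun_eq_iff)
  moreover have "(\<Prod>k\<in>\<Sigma>. B k (g (n + k)) (g k) * cnj (B k (g (n + k)) (x k)))
      = prod_basis \<Sigma> B (apparatus_cfg n \<Sigma> g) g * cnj (prod_basis \<Sigma> B (apparatus_cfg n \<Sigma> g) x)"
    unfolding prod_basis_def cnj_prod prod.distrib[symmetric]
    by (rule prod.cong) (simp_all add: apparatus_cfg_def)
  ultimately show ?thesis unfolding meas_iso_def by simp
qed

definition pt_isometry :: "nat \<Rightarrow> nat set \<Rightarrow> (nat \<Rightarrow> nat \<Rightarrow> nat \<Rightarrow> complex)
    \<Rightarrow> (nat \<Rightarrow> nat) \<Rightarrow> ((nat \<Rightarrow> nat) \<times> (nat \<Rightarrow> nat)) \<times> (nat \<Rightarrow> nat) \<Rightarrow> complex" where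
  "pt_isometry n \<Sigma> B g = (\<lambda>((b, a), u).
     prod_basis \<Sigma> B b g * op_id a (apparatus_cfg n \<Sigma> g) * op_id u (cfg_restrict ({1..n} - \<Sigma>) g))"

text \<open>Defined through \<^const>\<open>pt_isometry\<close>, so that its unitarity follows from the isometry
  property of \<^const>\<open>pt_isometry\<close>.\<close>
definition pt_coisometry :: "nat \<Rightarrow> nat set \<Rightarrow> (nat \<Rightarrow> nat \<Rightarrow> nat \<Rightarrow> complex)
    \<Rightarrow> ((nat \<Rightarrow> nat) \<times> (nat \<Rightarrow> nat)) \<times> (nat \<Rightarrow> nat) \<Rightarrow> (nat \<Rightarrow> nat) \<Rightarrow> complex" where
  "pt_coisometry n \<Sigma> B = op_adjoint (\<lambda>g q. pt_isometry n \<Sigma> B g (apfst prod.swap q))"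

context
  fixes n :: nat and d :: "nat \<Rightarrow> nat" and \<Sigma> :: "nat set"
  assumes \<Sigma>_sub: "\<Sigma> \<subseteq> {1..n}"
  notes One_nat_def [simp del]
    \<comment> \<open>keeps \<open>{1..n}\<close> from turning into \<open>{Suc 0..n}\<close>, so that the lemmas below
      still apply as rewrite rules\<close>
begin

abbreviation rest_sites :: "nat set" where
  "rest_sites \<equiv> {1..n} - \<Sigma>"

abbreviation premeas_cfgs :: "(nat \<Rightarrow> nat) set" where
  "premeas_cfgs \<equiv> cfgs (ext_dim n d) ({1..n} \<union> app_sites n \<Sigma>)"

abbreviation block_cfgs :: "(((nat \<Rightarrow> nat) \<times> (nat \<Rightarrow> nat)) \<times> (nat \<Rightarrow> nat)) set" where
  "block_cfgs \<equiv> (cfgs d \<Sigma> \<times> cfgs d \<Sigma>) \<times> cfgs d rest_sites"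

lemma finite_measured: "finite \<Sigma>"
  using \<Sigma>_sub by (rule finite_subset) simp

lemma finite_cfgs_measured: "finite (cfgs d \<Sigma>)"
  by (rule finite_cfgs[OF finite_measured])

lemma finite_cfgs_rest: "finite (cfgs d rest_sites)"
  by (simp add: finite_cfgs)

lemma bij_betw_cfg_merge:
  "bij_betw (\<lambda>(s, u). cfg_merge \<Sigma> s u) (cfgs d \<Sigma> \<times> cfgs d rest_sites) (cfgs d {1..n})"
  by (rule bij_betw_byWitness[where f'="\<lambda>x. (cfg_restrict \<Sigma> x, cfg_restrict rest_sites x)"])
     (use \<Sigma>_sub in \<open>auto simp: cfgs_def cfg_merge_def cfg_restrict_def fun_eq_iff\<close>)

lemma sum_cfgs_if_cfg_restrict_eq:
  assumes r: "r \<in> cfgs d rest_sites"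
  shows "(\<Sum>x\<in>cfgs d {1..n}. if cfg_restrict rest_sites x = r then F x else 0)
    = (\<Sum>s\<in>cfgs d \<Sigma>. F (cfg_merge \<Sigma> s r))"
proof -
  have "(\<Sum>x\<in>cfgs d {1..n}. if cfg_restrict rest_sites x = r then F x else 0)
      = (\<Sum>p\<in>cfgs d \<Sigma> \<times> cfgs d rest_sites. (\<lambda>x. if cfg_restrict rest_sites x = r then F x else 0)
          ((\<lambda>(s, u). cfg_merge \<Sigma> s u) p))"
    by (rule sum.reindex_bij_betw[OF bij_betw_cfg_merge, symmetric])
  also have "\<dots> = (\<Sum>s\<in>cfgs d \<Sigma>. \<Sum>u\<in>cfgs d rest_sites. if u = r then F (cfg_merge \<Sigma> s u) else 0)"
    unfolding sum.cartesian_product' by (intro sum.cong refl) (auto simp: cfg_restrict_cfg_merge)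
  also have "\<dots> = (\<Sum>s\<in>cfgs d \<Sigma>. F (cfg_merge \<Sigma> s r))"
    using r finite_cfgs_rest by simp
  finally show ?thesis .
qed

lemma premeas_eq:
  assumes g: "cfg_restrict rest_sites g \<in> cfgs d rest_sites"
    and h: "cfg_restrict rest_sites h \<in> cfgs d rest_sites"
  shows "premeas n d \<Sigma> B \<rho> g h =
    prod_basis \<Sigma> B (apparatus_cfg n \<Sigma> g) g * cnj (prod_basis \<Sigma> B (apparatus_cfg n \<Sigma> h) h)
    * block n d \<Sigma> B \<rho> (apparatus_cfg n \<Sigma> g) (apparatus_cfg n \<Sigma> h)
        (cfg_restrict rest_sites g) (cfg_restrict rest_sites h)"
proof -
  define a a' r r' where "a = apparatus_cfg n \<Sigma> g" and "a' = apparatus_cfg n \<Sigma> h"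
    and "r = cfg_restrict rest_sites g" and "r' = cfg_restrict rest_sites h"
  define C where "C = prod_basis \<Sigma> B a g * cnj (prod_basis \<Sigma> B a' h)"
  define G where "G x y = cnj (prod_basis \<Sigma> B a x) * \<rho> x y * prod_basis \<Sigma> B a' y" for x y
  have "premeas n d \<Sigma> B \<rho> g h = (\<Sum>x\<in>cfgs d {1..n}. if cfg_restrict rest_sites x = r then
      (\<Sum>y\<in>cfgs d {1..n}. if cfg_restrict rest_sites y = r' then C * G x y else 0) else 0)"
    unfolding premeas_def
    by (intro sum.cong refl) (auto simp: meas_iso_eq C_def G_def a_def a'_def r_def r'_def mult_ac
        intro!: sum.cong)
  also have "\<dots> = (\<Sum>s\<in>cfgs d \<Sigma>. \<Sum>t\<in>cfgs d \<Sigma>. C * G (cfg_merge \<Sigma> s r) (cfg_merge \<Sigma> t r'))"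
    using g h unfolding r_def[symmetric] r'_def[symmetric]
    by (simp only: sum_cfgs_if_cfg_restrict_eq)
  also have "\<dots> = C * block n d \<Sigma> B \<rho> a a' r r'"
    by (simp add: block_eq G_def sum_distrib_left)
  finally show ?thesis by (simp add: C_def a_def a'_def r_def r'_def)
qed

lemma mem_app_sites_iff: "k \<in> app_sites n \<Sigma> \<longleftrightarrow> n < k \<and> k - n \<in> \<Sigma>"
proof
  assume "k \<in> app_sites n \<Sigma>"
  then obtain j where "j \<in> \<Sigma>" "k = n + j" by (auto simp: app_sites_def)
  moreover have "1 \<le> j" using \<Sigma>_sub \<open>j \<in> \<Sigma>\<close> by auto
  ultimately show "n < k \<and> k - n \<in> \<Sigma>" by simp
next
  assume "n < k \<and> k - n \<in> \<Sigma>"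
  then show "k \<in> app_sites n \<Sigma>" unfolding app_sites_def by (auto intro: image_eqI[where x="k - n"])
qed

lemma premeas_cfgs_D:
  assumes g: "g \<in> premeas_cfgs"
  shows "cfg_restrict \<Sigma> g \<in> cfgs d \<Sigma>" "cfg_restrict rest_sites g \<in> cfgs d rest_sites"
    "apparatus_cfg n \<Sigma> g \<in> cfgs d \<Sigma>"
proof -
  have bound: "g k < ext_dim n d k" if "k \<in> {1..n} \<union> app_sites n \<Sigma>" for k
    using g that unfolding cfgs_def by blast
  have "g k < d k" if "k \<in> {1..n}" for k
    using bound[of k] that by (simp add: ext_dim_def)
  moreover have "g (n + k) < d k" if "k \<in> \<Sigma>" for k
    using bound[of "n + k"] that \<Sigma>_sub by (auto simp: ext_dim_def app_sites_def)
  ultimately show "cfg_restrict \<Sigma> g \<in> cfgs d \<Sigma>" "cfg_restrict rest_sites g \<in> cfgs d rest_sites"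
    "apparatus_cfg n \<Sigma> g \<in> cfgs d \<Sigma>"
    using \<Sigma>_sub by (auto simp: cfgs_def cfg_restrict_def apparatus_cfg_def)
qed

lemma partial_transpose_premeas_eq:
  assumes g: "g \<in> premeas_cfgs" and h: "h \<in> premeas_cfgs"
  shows "partial_transpose (app_sites n \<Sigma>) (premeas n d \<Sigma> B \<rho>) g h =
    prod_basis \<Sigma> B (apparatus_cfg n \<Sigma> h) g * cnj (prod_basis \<Sigma> B (apparatus_cfg n \<Sigma> g) h)
    * block n d \<Sigma> B \<rho> (apparatus_cfg n \<Sigma> h) (apparatus_cfg n \<Sigma> g)
        (cfg_restrict rest_sites g) (cfg_restrict rest_sites h)"
proof -
  define g' h' where "g' k = (if k \<in> app_sites n \<Sigma> then h k else g k)"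
    and "h' k = (if k \<in> app_sites n \<Sigma> then g k else h k)" for k
  have "g' k = g k" "h' k = h k" if "k \<le> n" for k
    using that by (simp_all add: g'_def h'_def mem_app_sites_iff)
  then have "cfg_restrict rest_sites g' = cfg_restrict rest_sites g"
    "cfg_restrict rest_sites h' = cfg_restrict rest_sites h"
    "prod_basis \<Sigma> B a g' = prod_basis \<Sigma> B a g" "prod_basis \<Sigma> B a h' = prod_basis \<Sigma> B a h" for a
    using \<Sigma>_sub by (auto simp: cfg_restrict_def fun_eq_iff intro!: prod_basis_cong)
  moreover have "apparatus_cfg n \<Sigma> g' = apparatus_cfg n \<Sigma> h"
    "apparatus_cfg n \<Sigma> h' = apparatus_cfg n \<Sigma> g"
    by (auto simp: apparatus_cfg_def g'_def h'_def app_sites_def fun_eq_iff)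
  ultimately show ?thesis
    using premeas_eq[of g' h' B \<rho>] premeas_cfgs_D(2)[OF g] premeas_cfgs_D(2)[OF h]
    by (simp add: partial_transpose_def g'_def[abs_def, symmetric] h'_def[abs_def, symmetric])
qed

lemma cfg_extend_mem:
  assumes "s \<in> cfgs d \<Sigma>" "u \<in> cfgs d rest_sites" "c \<in> cfgs d \<Sigma>"
  shows "cfg_extend n \<Sigma> s u c \<in> premeas_cfgs"
  using assms \<Sigma>_sub
  by (auto simp: cfgs_def cfg_extend_def cfg_merge_def ext_dim_def mem_app_sites_iff)

lemma cfg_extend_proj:
  assumes "s \<in> cfgs d \<Sigma>" "u \<in> cfgs d rest_sites" "c \<in> cfgs d \<Sigma>"
  shows "cfg_restrict \<Sigma> (cfg_extend n \<Sigma> s u c) = s"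
    "cfg_restrict rest_sites (cfg_extend n \<Sigma> s u c) = u"
    "apparatus_cfg n \<Sigma> (cfg_extend n \<Sigma> s u c) = c"
  using assms \<Sigma>_sub
  by (auto simp: cfgs_def cfg_extend_def cfg_merge_def cfg_restrict_def apparatus_cfg_def
      fun_eq_iff)

lemma cfg_extend_cfg_restrict:
  assumes "g \<in> premeas_cfgs"
  shows "cfg_extend n \<Sigma> (cfg_restrict \<Sigma> g) (cfg_restrict rest_sites g) (apparatus_cfg n \<Sigma> g) = g"
  using assms \<Sigma>_sub
  by (auto simp: cfgs_def cfg_extend_def cfg_merge_def cfg_restrict_def apparatus_cfg_def fun_eq_iff
      mem_app_sites_iff)

lemma bij_betw_cfg_extend:
  "bij_betw (\<lambda>(s, u, c). cfg_extend n \<Sigma> s u c)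
    (cfgs d \<Sigma> \<times> cfgs d rest_sites \<times> cfgs d \<Sigma>) premeas_cfgs"
  by (rule bij_betw_byWitness
      [where f'="\<lambda>g. (cfg_restrict \<Sigma> g, cfg_restrict rest_sites g, apparatus_cfg n \<Sigma> g)"])
     (auto simp: cfg_extend_proj cfg_extend_cfg_restrict cfg_extend_mem premeas_cfgs_D)

lemma sum_premeas_cfgs:
  "(\<Sum>g\<in>premeas_cfgs. F g)
    = (\<Sum>s\<in>cfgs d \<Sigma>. \<Sum>w\<in>cfgs d rest_sites \<times> cfgs d \<Sigma>. F (cfg_extend n \<Sigma> s (fst w) (snd w)))"
  unfolding sum.reindex_bij_betw[OF bij_betw_cfg_extend, symmetric] sum.cartesian_product'
  by (simp add: split_def)

lemma prod_basis_cfg_extend [simp]: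
  "prod_basis \<Sigma> B b (cfg_extend n \<Sigma> s u c) = prod_basis \<Sigma> B b s"
  using \<Sigma>_sub by (intro prod_basis_cong) (auto simp: cfg_extend_def cfg_merge_def)

lemma pt_isometry_cfg_extend:
  assumes "s \<in> cfgs d \<Sigma>" "u \<in> cfgs d rest_sites" "c \<in> cfgs d \<Sigma>"
  shows "pt_isometry n \<Sigma> B (cfg_extend n \<Sigma> s u c) ((b, a), v)
    = prod_basis \<Sigma> B b s * op_id a c * op_id v u"
  by (simp add: pt_isometry_def cfg_extend_proj[OF assms])

lemma pt_isometry_is_isometry:
  assumes B: "B \<in> bases d \<Sigma>" and q: "q \<in> block_cfgs" and q': "q' \<in> block_cfgs"
  shows "op_mult premeas_cfgs (op_adjoint (pt_isometry n \<Sigma> B)) (pt_isometry n \<Sigma> B) q q'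
    = op_id q q'"
proof -
  obtain b a u b' a' u' where qq: "q = ((b, a), u)" "q' = ((b', a'), u')"
    and mem: "b \<in> cfgs d \<Sigma>" "a \<in> cfgs d \<Sigma>" "u \<in> cfgs d rest_sites" "b' \<in> cfgs d \<Sigma>"
    using q q' by auto
  let ?P = "op_id (a, u) (a', u')" and ?G = "\<lambda>s. cnj (prod_basis \<Sigma> B b s) * prod_basis \<Sigma> B b' s"
  have "op_mult premeas_cfgs (op_adjoint (pt_isometry n \<Sigma> B)) (pt_isometry n \<Sigma> B) q q'
      = (\<Sum>s\<in>cfgs d \<Sigma>. \<Sum>w\<in>cfgs d rest_sites \<times> cfgs d \<Sigma>. if w = (u, a) then ?P * ?G s else 0)"
    unfolding op_mult_def op_adjoint_def sum_premeas_cfgs qq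
    by (intro sum.cong refl) (auto simp: pt_isometry_cfg_extend op_id_def split: if_splits)
  also have "\<dots> = ?P * (\<Sum>s\<in>cfgs d \<Sigma>. ?G s)"
    using mem finite_cfgs_measured finite_cfgs_rest by (simp add: sum_distrib_left)
  also have "(\<Sum>s\<in>cfgs d \<Sigma>. ?G s) = op_id b b'"
    using B mem by (intro prod_basis_orthonormal[OF finite_measured]) (simp_all add: bases_def)
  also have "?P * op_id b b' = op_id q q'"
    by (simp add: qq op_id_def)
  finally show ?thesis .
qed

lemma pt_coisometry_is_coisometry:
  assumes B: "B \<in> bases d \<Sigma>" and q: "q \<in> block_cfgs" and q': "q' \<in> block_cfgs"
  shows "op_mult premeas_cfgs (pt_coisometry n \<Sigma> B) (op_adjoint (pt_coisometry n \<Sigma> B)) q q'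
    = op_id q q'"
proof -
  have swap: "apfst prod.swap q \<in> block_cfgs" "apfst prod.swap q' \<in> block_cfgs"
    using q q' by (cases q, cases q', auto)+
  have "op_mult premeas_cfgs (pt_coisometry n \<Sigma> B) (op_adjoint (pt_coisometry n \<Sigma> B)) q q'
      = op_mult premeas_cfgs (op_adjoint (pt_isometry n \<Sigma> B)) (pt_isometry n \<Sigma> B)
          (apfst prod.swap q) (apfst prod.swap q')"
    by (simp add: op_mult_def op_adjoint_def pt_coisometry_def)
  also have "\<dots> = op_id (apfst prod.swap q) (apfst prod.swap q')"
    by (rule pt_isometry_is_isometry[OF B swap])
  also have "\<dots> = op_id q q'"
    by (cases q, cases q') (auto simp: op_id_def)
  finally show ?thesis .
qed

lemma partial_transpose_premeas_factorization:
  assumes g: "g \<in> premeas_cfgs" and h: "h \<in> premeas_cfgs"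
  shows "partial_transpose (app_sites n \<Sigma>) (premeas n d \<Sigma> B \<rho>) g h
    = op_mult block_cfgs (pt_isometry n \<Sigma> B)
        (op_mult block_cfgs (op_block_diag (case_prod (block n d \<Sigma> B \<rho>)))
          (pt_coisometry n \<Sigma> B)) g h"
proof -
  let ?D = "op_block_diag (case_prod (block n d \<Sigma> B \<rho>))"
  define a a' r r' where "a = apparatus_cfg n \<Sigma> g" and "a' = apparatus_cfg n \<Sigma> h"
    and "r = cfg_restrict rest_sites g" and "r' = cfg_restrict rest_sites h"
  have mem: "a \<in> cfgs d \<Sigma>" "a' \<in> cfgs d \<Sigma>" "r \<in> cfgs d rest_sites" "r' \<in> cfgs d rest_sites"
    using premeas_cfgs_D[OF g] premeas_cfgs_D[OF h] by (simp_all add: a_def a'_def r_def r'_def)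
  have inner: "op_mult block_cfgs ?D (pt_coisometry n \<Sigma> B) ((b, c), u) h
      = op_id b a' * cnj (prod_basis \<Sigma> B c h) * block n d \<Sigma> B \<rho> b c u r'"
    if "b \<in> cfgs d \<Sigma>" "c \<in> cfgs d \<Sigma>" for b c u
  proof -
    have "op_mult block_cfgs ?D (pt_coisometry n \<Sigma> B) ((b, c), u) h
        = (\<Sum>q\<in>block_cfgs. if q = ((b, c), r')
             then op_id b a' * cnj (prod_basis \<Sigma> B c h) * block n d \<Sigma> B \<rho> b c u r' else 0)"
      unfolding op_mult_def
      by (intro sum.cong refl)
         (auto simp: op_block_diag_def pt_coisometry_def pt_isometry_def op_adjoint_def op_id_def
           a'_def r'_def split: if_splits)
    then show ?thesis using that mem finite_cfgs_measured finite_cfgs_rest by simp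
  qed
  have "op_mult block_cfgs (pt_isometry n \<Sigma> B) (op_mult block_cfgs ?D (pt_coisometry n \<Sigma> B)) g h
      = (\<Sum>q\<in>block_cfgs. if q = ((a', a), r)
           then prod_basis \<Sigma> B a' g * cnj (prod_basis \<Sigma> B a h) * block n d \<Sigma> B \<rho> a' a r r' else 0)"
    unfolding op_mult_def[of block_cfgs "pt_isometry n \<Sigma> B"]
    by (intro sum.cong refl)
       (auto simp: inner pt_isometry_def op_id_def a_def r_def split: if_splits)
  also have "\<dots> = partial_transpose (app_sites n \<Sigma>) (premeas n d \<Sigma> B \<rho>) g h"
    using mem finite_cfgs_measured finite_cfgs_rest
    by (simp add: partial_transpose_premeas_eq[OF g h] a_def a'_def r_def r'_def)
  finally show ?thesis ..
qed

lemma trace_norm_partial_transpose_premeas: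
  assumes B: "B \<in> bases d \<Sigma>"
  shows "trace_norm premeas_cfgs (partial_transpose (app_sites n \<Sigma>) (premeas n d \<Sigma> B \<rho>))
    = (\<Sum>i\<in>cfgs d \<Sigma>. \<Sum>j\<in>cfgs d \<Sigma>. trace_norm (cfgs d rest_sites) (block n d \<Sigma> B \<rho> i j))"
proof -
  have finite: "finite premeas_cfgs"
    using bij_betw_finite[OF bij_betw_cfg_extend] finite_cfgs_measured finite_cfgs_rest by simp
  have card: "card block_cfgs = card premeas_cfgs"
    using bij_betw_same_card[OF bij_betw_cfg_extend] by (simp add: card_cartesian_product mult_ac)
  have "trace_norm premeas_cfgs (partial_transpose (app_sites n \<Sigma>) (premeas n d \<Sigma> B \<rho>))
      = trace_norm premeas_cfgs (op_mult block_cfgs (pt_isometry n \<Sigma> B)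
          (op_mult block_cfgs (op_block_diag (case_prod (block n d \<Sigma> B \<rho>))) (pt_coisometry n \<Sigma> B)))"
    by (intro trace_norm_cong[OF finite] partial_transpose_premeas_factorization)
  also have "\<dots> = trace_norm block_cfgs (op_block_diag (case_prod (block n d \<Sigma> B \<rho>)))"
    using finite_cfgs_measured finite_cfgs_rest
    by (intro trace_norm_isometry_mult_unitary[OF finite _ card] pt_isometry_is_isometry[OF B]
        pt_coisometry_is_coisometry[OF B]) simp_all
  also have "\<dots> = (\<Sum>p\<in>cfgs d \<Sigma> \<times> cfgs d \<Sigma>.
      trace_norm (cfgs d rest_sites) (case_prod (block n d \<Sigma> B \<rho>) p))"
    using finite_cfgs_measured finite_cfgs_rest by (simp add: trace_norm_op_block_diag)
  also have "\<dots> = (\<Sum>i\<in>cfgs d \<Sigma>. \<Sum>j\<in>cfgs d \<Sigma>. trace_norm (cfgs d rest_sites) (block n d \<Sigma> B \<rho> i j))"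
    unfolding sum.cartesian_product' by simp
  finally show ?thesis .
qed

end

theorem theorem3:
  fixes n :: nat and d :: "nat \<Rightarrow> nat" and \<Sigma> :: "nat set"
    and \<rho> :: "(nat \<Rightarrow> nat) \<Rightarrow> (nat \<Rightarrow> nat) \<Rightarrow> complex"
  assumes "\<forall>k\<in>{1..n}. 1 \<le> d k"
    and "is_state (cfgs d {1..n}) \<rho>"
    and "\<Sigma> \<subseteq> {1..n}" and "\<Sigma> \<noteq> {}"
  shows "QN n d \<Sigma> \<rho> =
    (INF B\<in>bases d \<Sigma>.
       ((\<Sum>i\<in>cfgs d \<Sigma>. \<Sum>j\<in>cfgs d \<Sigma>.
           trace_norm (cfgs d ({1..n} - \<Sigma>)) (block n d \<Sigma> B \<rho> i j)) - 1) / 2)"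
  \<comment> \<open>only \<open>\<Sigma> \<subseteq> {1..n}\<close> is used: the identity holds for every operator \<rho>\<close>
  unfolding QN_def negativity_def
  using trace_norm_partial_transpose_premeas[OF assms(3)] by simp

end
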